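(* Let $(\Sigma_+,\Sigma_-,N_1,N_2,N_3)$ be a solution of the Wainwright–Hsu system satisfying the constraint, with $N_1<0$ and $N_2,N_3>0$. Then for every $\epsilon>0$ there is $T$ such that $-N_1(\tau)(N_2+N_3)(\tau)\geq\frac12-\epsilon$ for all $\tau\geq T$.
   Context: Wainwright–Hsu system: for functions $N_1,N_2,N_3,\Sigma_+,\Sigma_-$ of $\tau\in\mathbb{R}$ (prime denotes $d/d\tau$), $N_1'=(q-4\Sigma_+)N_1$, $N_2'=(q+2\Sigma_++2\sqrt3\Sigma_-)N_2$, $N_3'=(q+2\Sigma_+-2\sqrt3\Sigma_-)N_3$, $\Sigma_+'=-(2-q)\Sigma_+-3S_+$, $\Sigma_-'=-(2-q)\Sigma_--3S_-$, where $q=2(\Sigma_+^2+\Sigma_-^2)$, $S_+=\frac12[(N_2-N_3)^2-N_1(2N_1-N_2-N_3)]$, $S_-=\frac{\sqrt3}{2}(N_3-N_2)(N_1-N_2-N_3)$, together with the constraint $\Sigma_+^2+\Sigma_-^2+\frac34[N_1^2+N_2^2+N_3^2-2(N_1N_2+N_2N_3+N_1N_3)]=1$. Solutions with these sign conditions exist for all $\tau\in\mathbb{R}$. *)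

theory Defs
  imports "HOL-Analysis.Analysis"
begin

definition WH_q :: "real \<Rightarrow> real \<Rightarrow> real" where
  "WH_q Sp Sm = 2 * (Sp\<^sup>2 + Sm\<^sup>2)"

definition WH_Sp :: "real \<Rightarrow> real \<Rightarrow> real \<Rightarrow> real" where
  "WH_Sp n1 n2 n3 = (1/2) * ((n2 - n3)\<^sup>2 - n1 * (2*n1 - n2 - n3))"

definition WH_Sm :: "real \<Rightarrow> real \<Rightarrow> real \<Rightarrow> real" where
  "WH_Sm n1 n2 n3 = (sqrt 3 / 2) * (n3 - n2) * (n1 - n2 - n3)"

definition WH_solution ::
  "(real \<Rightarrow> real) \<Rightarrow> (real \<Rightarrow> real) \<Rightarrow> (real \<Rightarrow> real) \<Rightarrow> (real \<Rightarrow> real) \<Rightarrow> (real \<Rightarrow> real) \<Rightarrow> bool" where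
  "WH_solution N1 N2 N3 Sp Sm \<longleftrightarrow>
    (\<forall>t. (N1 has_real_derivative ((WH_q (Sp t) (Sm t) - 4 * Sp t) * N1 t)) (at t)
       \<and> (N2 has_real_derivative ((WH_q (Sp t) (Sm t) + 2 * Sp t + 2 * sqrt 3 * Sm t) * N2 t)) (at t)
       \<and> (N3 has_real_derivative ((WH_q (Sp t) (Sm t) + 2 * Sp t - 2 * sqrt 3 * Sm t) * N3 t)) (at t)
       \<and> (Sp has_real_derivative (- (2 - WH_q (Sp t) (Sm t)) * Sp t - 3 * WH_Sp (N1 t) (N2 t) (N3 t))) (at t)
       \<and> (Sm has_real_derivative (- (2 - WH_q (Sp t) (Sm t)) * Sm t - 3 * WH_Sm (N1 t) (N2 t) (N3 t))) (at t)
       \<and> (Sp t)\<^sup>2 + (Sm t)\<^sup>2 + (3/4) * ((N1 t)\<^sup>2 + (N2 t)\<^sup>2 + (N3 t)\<^sup>2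
            - 2 * (N1 t * N2 t + N2 t * N3 t + N1 t * N3 t)) = 1)"

end

theory Submission
  imports Defs
begin

(* Write x = -N1, n = N2 + N3, m = N2 - N3, Z = x n and P = m Sigma_- / n.  The constraint reads
   Sigma_+^2 + Sigma_-^2 + 3/4 (x^2 + m^2) + 3/2 Z = 1, so all variables except n are bounded.
   First, Delta = -N1 N2 N3 satisfies (ln Delta)' = 3 q, and G = Sigma_+ - (sqrt 3/2) P + 3/2 ln Delta
   has G' >= 1/2.  As Sigma_+ - (sqrt 3/2) P is bounded, ln Delta grows linearly; since
   Delta <= n/6, n tends to infinity and P = O(1/n) tends to 0.
   Second, Y = ln Z - P / sqrt 3 satisfies Y' >= 3/2 - 3 Z - 4/n for n >= 1.  So for large times Y
   increases at a fixed positive rate whenever Z < 1/2 - epsilon/2; hence Y eventually stays above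
   ln (1/2 - epsilon/2) - delta, and as P -> 0 this gives Z >= 1/2 - epsilon eventually. *)

(* Functions on the state space in the coordinates x = -N1, n = N2 + N3, m = N2 - N3, p = Sigma_+,
   r = Sigma_-: the derivatives of ln Z, of P and of Sigma_+ along the flow (see WH_VIII_orbit). *)
definition WH_lnZ_rate :: "real \<Rightarrow> real \<Rightarrow> real \<Rightarrow> real \<Rightarrow> real \<Rightarrow> real" where
  "WH_lnZ_rate x n m p r = 2 * (WH_q p r - p) + 2 * sqrt 3 * r * m / n"

definition WH_P_rate :: "real \<Rightarrow> real \<Rightarrow> real \<Rightarrow> real \<Rightarrow> real \<Rightarrow> real" where
  "WH_P_rate x n m p r = (WH_q p r - 2) * m * r / n + 2 * sqrt 3 * (r\<^sup>2 - 3/4 * m\<^sup>2)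
     - 3/2 * sqrt 3 * m\<^sup>2 * x / n - 2 * sqrt 3 * r\<^sup>2 * m\<^sup>2 / n\<^sup>2"

definition WH_Sp_rate :: "real \<Rightarrow> real \<Rightarrow> real \<Rightarrow> real \<Rightarrow> real \<Rightarrow> real" where
  "WH_Sp_rate x n m p r = - (2 - WH_q p r) * p - 3/2 * m\<^sup>2 + 3 * x\<^sup>2 + 3/2 * x * n"

locale WH_state =
  fixes x n m p r :: real
  assumes constraint: "p\<^sup>2 + r\<^sup>2 + 3/4 * x\<^sup>2 + 3/4 * m\<^sup>2 + 3/2 * x * n = 1"
    and x_pos: "0 < x" and n_pos: "0 < n" and abs_m_le: "\<bar>m\<bar> \<le> n"
begin

lemma shear_sq_le_1: "p\<^sup>2 + r\<^sup>2 \<le> 1"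
  and r_m_sq_le_1: "r\<^sup>2 + 3/4 * m\<^sup>2 \<le> 1"
  and xn_le: "x * n \<le> 2/3"
  using constraint mult_pos_pos[OF x_pos n_pos] zero_le_power2[of x] zero_le_power2[of m]
    zero_le_power2[of p] zero_le_power2[of r] by linarith+

lemma abs_p_le_1: "\<bar>p\<bar> \<le> 1"
  and abs_r_le_1: "\<bar>r\<bar> \<le> 1"
  using shear_sq_le_1 abs_le_square_iff[of p 1] abs_le_square_iff[of r 1]
    zero_le_power2[of p] zero_le_power2[of r] by simp_all

lemma q_nonneg: "0 \<le> WH_q p r"
  and q_le_2: "WH_q p r \<le> 2"
  using shear_sq_le_1 by (simp_all add: WH_q_def)

lemma sqrt3_abs_rm_le_1: "sqrt 3 * \<bar>r * m\<bar> \<le> 1"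
proof -
  have "0 \<le> (\<bar>r\<bar> - sqrt 3 / 2 * \<bar>m\<bar>)\<^sup>2" by simp
  also have "\<dots> = r\<^sup>2 + 3/4 * m\<^sup>2 - sqrt 3 * \<bar>r * m\<bar>"
    by (simp add: power2_eq_square algebra_simps abs_mult)
  finally show ?thesis using r_m_sq_le_1 by simp
qed

lemma abs_mr_div_n_le: "\<bar>m * r / n\<bar> \<le> 1 / (sqrt 3 * n)"
  using sqrt3_abs_rm_le_1 n_pos by (simp add: abs_mult abs_div field_simps)

lemma abs_mr_div_n_le_abs_r: "\<bar>m * r / n\<bar> \<le> \<bar>r\<bar>"
  using mult_right_mono[OF abs_m_le abs_ge_zero[of r]] n_pos
  by (simp add: abs_mult abs_div divide_le_eq mult.commute)

lemma Y_rate_identity: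
  "WH_lnZ_rate x n m p r - WH_P_rate x n m p r / sqrt 3
     = 3/2 - 3 * x * n + 2 * (p - 1/2)\<^sup>2 - 3/2 * x\<^sup>2 + sqrt 3 * (r * m) * (8 - WH_q p r) / (3 * n)
       + 3/2 * m\<^sup>2 * x / n + 2 * r\<^sup>2 * m\<^sup>2 / n\<^sup>2"
proof -
  have quadratic_part: "2 * (WH_q p r - p) - 2 * (r\<^sup>2 - 3/4 * m\<^sup>2) = 3/2 - 3 * x * n + 2 * (p - 1/2)\<^sup>2 - 3/2 * x\<^sup>2"
    using constraint by (simp add: WH_q_def power2_eq_square algebra_simps)
  have cross_terms: "2 * sqrt 3 * r * m / n - (WH_q p r - 2) * m * r / n / sqrt 3
      = sqrt 3 * (r * m) * (8 - WH_q p r) / (3 * n)"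
    using n_pos by (simp add: field_simps)
  have "WH_P_rate x n m p r = (WH_q p r - 2) * m * r / n
      + sqrt 3 * (2 * (r\<^sup>2 - 3/4 * m\<^sup>2) - 3/2 * m\<^sup>2 * x / n - 2 * r\<^sup>2 * m\<^sup>2 / n\<^sup>2)"
    unfolding WH_P_rate_def by (simp add: algebra_simps)
  then have P_div: "WH_P_rate x n m p r / sqrt 3 = (WH_q p r - 2) * m * r / n / sqrt 3
      + (2 * (r\<^sup>2 - 3/4 * m\<^sup>2) - 3/2 * m\<^sup>2 * x / n - 2 * r\<^sup>2 * m\<^sup>2 / n\<^sup>2)"
    by (simp add: add_divide_distrib)
  show ?thesis
    unfolding WH_lnZ_rate_def P_div quadratic_part[symmetric] cross_terms[symmetric] by (simp add: algebra_simps)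
qed

lemma Y_rate_ge:
  assumes "1 \<le> n"
  shows "3/2 - 3 * x * n - 4 / n \<le> WH_lnZ_rate x n m p r - WH_P_rate x n m p r / sqrt 3"
proof -
  have "- (8/3) \<le> sqrt 3 * (r * m) * (8 - WH_q p r) / 3"
  proof -
    have "\<bar>sqrt 3 * (r * m) * (8 - WH_q p r)\<bar> \<le> 1 * 8"
      unfolding abs_mult[of _ "8 - WH_q p r"]
      using sqrt3_abs_rm_le_1 q_nonneg q_le_2 by (intro mult_mono) (simp_all add: abs_mult)
    then show ?thesis by linarith
  qed
  then have "- (8/3 / n) \<le> sqrt 3 * (r * m) * (8 - WH_q p r) / (3 * n)"
    using n_pos by (simp add: divide_right_mono field_simps)
  moreover have "3/2 * x\<^sup>2 \<le> 2/3 / n"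
  proof -
    have "x \<le> 2/3 / n" using xn_le n_pos by (simp add: field_simps)
    then have "x\<^sup>2 \<le> (2/3 / n)\<^sup>2" using x_pos by (simp add: power_mono)
    also have "\<dots> \<le> 4/9 / n" using assms by (simp add: power2_eq_square field_simps)
    finally show ?thesis by simp
  qed
  moreover have "0 \<le> 3/2 * m\<^sup>2 * x / n" "0 \<le> 2 * r\<^sup>2 * m\<^sup>2 / n\<^sup>2" "0 \<le> 2 * (p - 1/2)\<^sup>2"
    using x_pos n_pos by simp_all
  moreover have "8/3 / n + 2/3 / n \<le> 4 / n"
    using n_pos by (simp add: field_simps)
  ultimately show ?thesis
    unfolding Y_rate_identity by linarith
qed

lemma G_rate_identity:
  "WH_Sp_rate x n m p r - sqrt 3 / 2 * WH_P_rate x n m p r + 9/2 * WH_q p r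
     = 1 - 2 * p + WH_q p r * p + 8 * p\<^sup>2 + 5 * r\<^sup>2 + 9/4 * x\<^sup>2
       + 9/4 * (m\<^sup>2 * x / n) + 3 * (r\<^sup>2 * m\<^sup>2 / n\<^sup>2)
       + sqrt 3 / 2 * (2 - WH_q p r) * (m * r / n)"
proof -
  have sqrt3_sqrt3: "sqrt 3 * (sqrt 3 * t) = 3 * t" for t :: real
    by (simp flip: mult.assoc)
  have "sqrt 3 / 2 * WH_P_rate x n m p r = sqrt 3 / 2 * (WH_q p r - 2) * (m * r / n)
      + 3 * (r\<^sup>2 - 3/4 * m\<^sup>2) - 9/4 * (m\<^sup>2 * x / n) - 3 * (r\<^sup>2 * m\<^sup>2 / n\<^sup>2)"
    unfolding WH_P_rate_def by (simp add: algebra_simps sqrt3_sqrt3 diff_divide_distrib)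
  then show ?thesis
    using constraint unfolding WH_Sp_rate_def by (simp add: WH_q_def algebra_simps)
qed

lemma G_rate_ge:
  "1/2 \<le> WH_Sp_rate x n m p r - sqrt 3 / 2 * WH_P_rate x n m p r + 9/2 * WH_q p r"
proof -
  have "- WH_q p r \<le> WH_q p r * p"
    using mult_left_mono[OF _ q_nonneg, of "-1" p] abs_p_le_1 by simp
  moreover have "- (sqrt 3 * \<bar>r\<bar>) \<le> sqrt 3 / 2 * (2 - WH_q p r) * (m * r / n)"
  proof -
    have "\<bar>sqrt 3 / 2 * (2 - WH_q p r) * (m * r / n)\<bar> \<le> sqrt 3 / 2 * 2 * \<bar>r\<bar>"
      unfolding abs_mult[of _ "m * r / n"]
      using abs_mr_div_n_le_abs_r q_nonneg q_le_2 by (intro mult_mono) auto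
    then show ?thesis by linarith
  qed
  moreover have "0 \<le> 6 * p\<^sup>2 - 2 * p + 1/6"
  proof -
    have "0 \<le> 6 * (p - 1/6)\<^sup>2" by simp
    then show ?thesis by (simp add: power2_eq_square algebra_simps)
  qed
  moreover have "0 \<le> 3 * r\<^sup>2 - sqrt 3 * \<bar>r\<bar> + 1/4"
  proof -
    have "0 \<le> (sqrt 3 * \<bar>r\<bar> - 1/2)\<^sup>2" by simp
    then show ?thesis by (simp add: power2_eq_square algebra_simps)
  qed
  moreover have "0 \<le> 9/4 * x\<^sup>2" "0 \<le> 9/4 * (m\<^sup>2 * x / n)" "0 \<le> 3 * (r\<^sup>2 * m\<^sup>2 / n\<^sup>2)"
    using x_pos n_pos by simp_all
  moreover have "WH_q p r = 2 * p\<^sup>2 + 2 * r\<^sup>2"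
    by (simp add: WH_q_def)
  ultimately show ?thesis
    unfolding G_rate_identity by linarith
qed

end

lemma DERIV_ge_imp_linear_lower_bound:
  fixes f f' :: "real \<Rightarrow> real"
  assumes "\<And>t. (f has_real_derivative f' t) (at t)" and "\<And>t. c \<le> f' t" and "a \<le> b"
  shows "f a + c * (b - a) \<le> f b"
proof (cases "a = b")
  case False
  with assms(3) obtain z where "f b - f a = (b - a) * f' z"
    using MVT2[of a b f f'] assms(1) by force
  moreover have "(b - a) * c \<le> (b - a) * f' z"
    using assms(2,3) by (intro mult_left_mono) auto
  ultimately show ?thesis by (simp add: algebra_simps)
qed simp

lemma threshold_reached:
  fixes f f' :: "real \<Rightarrow> real"
  assumes der: "\<And>t. T \<le> t \<Longrightarrow> (f has_real_derivative f' t) (at t)"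
    and rate: "\<And>t. T \<le> t \<Longrightarrow> f t < \<theta> \<Longrightarrow> e \<le> f' t" and "0 < e"
  shows "\<exists>t\<ge>T. \<theta> \<le> f t"
proof (rule ccontr)
  assume "\<not> (\<exists>t\<ge>T. \<theta> \<le> f t)"
  then have below: "\<And>t. T \<le> t \<Longrightarrow> f t < \<theta>" by force
  define L where "L = (\<theta> - f T) / e + 1"
  have "0 < (\<theta> - f T) / e"
    using below[of T] \<open>0 < e\<close> by simp
  then have L_pos: "0 < L"
    by (simp add: L_def)
  obtain z where z: "T < z" "z < T + L" "f (T + L) - f T = L * f' z"
    using MVT2[of T "T + L" f f'] L_pos der by auto
  have "L * e \<le> L * f' z"
    using rate[of z] below[of z] z L_pos by simp
  moreover have "L * e = \<theta> - f T + e"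
    using \<open>0 < e\<close> by (simp add: L_def field_simps)
  ultimately have "\<theta> < f (T + L)"
    using z \<open>0 < e\<close> by simp
  with below[of "T + L"] L_pos show False by simp
qed

lemma threshold_forward_invariant:
  fixes f f' :: "real \<Rightarrow> real"
  assumes der: "\<And>t. T \<le> t \<Longrightarrow> (f has_real_derivative f' t) (at t)"
    and rate: "\<And>t. T \<le> t \<Longrightarrow> f t < \<theta> \<Longrightarrow> 0 < f' t"
    and "T \<le> a" "\<theta> \<le> f a" "a \<le> b"
  shows "\<theta> \<le> f b"
proof (rule ccontr)
  assume "\<not> \<theta> \<le> f b"
  have cont: "continuous_on {a..b} f"
    using der \<open>T \<le> a\<close> by (intro DERIV_atLeastAtMost_imp_continuous_on) (meson order_trans)
  obtain t where t: "t \<in> {a..b}" and t_min: "\<forall>s\<in>{a..b}. f t \<le> f s"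
    using continuous_attains_inf[OF compact_Icc _ cont] \<open>a \<le> b\<close> by auto
  have "f t < \<theta>"
    using t_min \<open>a \<le> b\<close> \<open>\<not> \<theta> \<le> f b\<close> by force
  then have "a < t"
    using t \<open>\<theta> \<le> f a\<close> by (cases "t = a") auto
  have "0 < f' t"
    using rate \<open>f t < \<theta>\<close> t \<open>T \<le> a\<close> by auto
  then obtain d where "0 < d" and dec: "\<And>h. 0 < h \<Longrightarrow> h < d \<Longrightarrow> f (t - h) < f t"
    using DERIV_pos_inc_left[OF der[of t]] t \<open>T \<le> a\<close> by auto
  define h where "h = min d (t - a) / 2"
  have "0 < h" "h < d" "h \<le> t - a"
    using \<open>0 < d\<close> \<open>a < t\<close> by (auto simp: h_def)
  then have "f (t - h) < f t" "t - h \<in> {a..b}"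
    using dec t by auto
  then show False
    using t_min by force
qed

lemma eventually_ge_threshold:
  fixes f f' :: "real \<Rightarrow> real"
  assumes der: "\<And>t. T \<le> t \<Longrightarrow> (f has_real_derivative f' t) (at t)"
    and rate: "\<And>t. T \<le> t \<Longrightarrow> f t < \<theta> \<Longrightarrow> e \<le> f' t" and "0 < e"
  shows "eventually (\<lambda>t. \<theta> \<le> f t) at_top"
proof -
  obtain t\<^sub>0 where "T \<le> t\<^sub>0" "\<theta> \<le> f t\<^sub>0"
    using threshold_reached[OF der rate \<open>0 < e\<close>] by blast
  moreover have "\<And>t. T \<le> t \<Longrightarrow> f t < \<theta> \<Longrightarrow> 0 < f' t"
    using rate \<open>0 < e\<close> by (meson less_le_trans)
  ultimately have "\<theta> \<le> f t" if "t\<^sub>0 \<le> t" for t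
    using threshold_forward_invariant[OF der] that by blast
  then show ?thesis
    unfolding eventually_at_top_linorder by blast
qed

locale WH_VIII_orbit =
  fixes N1 N2 N3 Sp Sm :: "real \<Rightarrow> real"
  assumes solution: "WH_solution N1 N2 N3 Sp Sm"
    and N1_neg: "\<And>t. N1 t < 0" and N2_pos: "\<And>t. 0 < N2 t" and N3_pos: "\<And>t. 0 < N3 t"
begin

abbreviation along :: "(real \<Rightarrow> real \<Rightarrow> real \<Rightarrow> real \<Rightarrow> real \<Rightarrow> 'a) \<Rightarrow> real \<Rightarrow> 'a" where
  "along F t \<equiv> F (- N1 t) (N2 t + N3 t) (N2 t - N3 t) (Sp t) (Sm t)"

definition Z :: "real \<Rightarrow> real" where
  "Z = (\<lambda>t. - N1 t * (N2 t + N3 t))"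

definition P :: "real \<Rightarrow> real" where
  "P = (\<lambda>t. (N2 t - N3 t) * Sm t / (N2 t + N3 t))"

definition Delta :: "real \<Rightarrow> real" where
  "Delta = (\<lambda>t. - N1 t * N2 t * N3 t)"

lemma N1_deriv: "(N1 has_real_derivative (WH_q (Sp t) (Sm t) - 4 * Sp t) * N1 t) (at t)"
  and N2_deriv: "(N2 has_real_derivative
      (WH_q (Sp t) (Sm t) + 2 * Sp t + 2 * sqrt 3 * Sm t) * N2 t) (at t)"
  and N3_deriv: "(N3 has_real_derivative
      (WH_q (Sp t) (Sm t) + 2 * Sp t - 2 * sqrt 3 * Sm t) * N3 t) (at t)"
  and Sm_deriv: "(Sm has_real_derivative
      - (2 - WH_q (Sp t) (Sm t)) * Sm t - 3 * WH_Sm (N1 t) (N2 t) (N3 t)) (at t)"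
  and constraint: "(Sp t)\<^sup>2 + (Sm t)\<^sup>2 + (3/4) * ((N1 t)\<^sup>2 + (N2 t)\<^sup>2 + (N3 t)\<^sup>2
      - 2 * (N1 t * N2 t + N2 t * N3 t + N1 t * N3 t)) = 1"
  using solution unfolding WH_solution_def by blast+

lemma state: "along WH_state t"
proof
  show "(Sp t)\<^sup>2 + (Sm t)\<^sup>2 + 3/4 * (- N1 t)\<^sup>2 + 3/4 * (N2 t - N3 t)\<^sup>2
      + 3/2 * (- N1 t) * (N2 t + N3 t) = 1"
    using constraint[of t] by (simp add: power2_eq_square algebra_simps)
qed (use N1_neg[of t] N2_pos[of t] N3_pos[of t] in auto)

lemma Sp_deriv: "(Sp has_real_derivative along WH_Sp_rate t) (at t)"
proof -
  have "(Sp has_real_derivative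
      - (2 - WH_q (Sp t) (Sm t)) * Sp t - 3 * WH_Sp (N1 t) (N2 t) (N3 t)) (at t)"
    using solution unfolding WH_solution_def by blast
  then show ?thesis
    by (rule DERIV_cong) (simp add: WH_Sp_rate_def WH_Sp_def power2_eq_square algebra_simps)
qed

lemma Z_pos: "0 < Z t"
  using N1_neg[of t] N2_pos[of t] N3_pos[of t] by (simp add: Z_def mult_neg_pos)

lemma Delta_pos: "0 < Delta t"
  using N1_neg[of t] N2_pos[of t] N3_pos[of t] by (simp add: Delta_def mult_neg_pos)

lemma ln_Z_deriv: "((\<lambda>t. ln (Z t)) has_real_derivative along WH_lnZ_rate t) (at t)"
proof -
  define n where "n = N2 t + N3 t"
  have "n \<noteq> 0"
    using N2_pos[of t] N3_pos[of t] by (simp add: n_def)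
  have "(Z has_real_derivative Z t * along WH_lnZ_rate t) (at t)"
    unfolding Z_def
    by (rule DERIV_cong[OF DERIV_mult[OF DERIV_minus[OF N1_deriv] DERIV_add[OF N2_deriv N3_deriv]]])
      (unfold WH_lnZ_rate_def n_def[symmetric], use \<open>n \<noteq> 0\<close> in \<open>simp add: n_def field_simps\<close>)
  then have "((\<lambda>t. ln (Z t)) has_real_derivative 1 / Z t * (Z t * along WH_lnZ_rate t)) (at t)"
    by (rule DERIV_chain2[where g = Z and x = t, OF DERIV_ln_divide[OF Z_pos]])
  then show ?thesis
    using Z_pos[of t] by simp
qed

lemma ln_Delta_deriv: "((\<lambda>t. ln (Delta t)) has_real_derivative 3 * WH_q (Sp t) (Sm t)) (at t)"
proof -
  have "(Delta has_real_derivative Delta t * (3 * WH_q (Sp t) (Sm t))) (at t)"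
    unfolding Delta_def
    by (rule DERIV_cong[OF DERIV_mult[OF DERIV_mult[OF DERIV_minus[OF N1_deriv] N2_deriv] N3_deriv]])
      (simp add: algebra_simps)
  then have "((\<lambda>t. ln (Delta t)) has_real_derivative
      1 / Delta t * (Delta t * (3 * WH_q (Sp t) (Sm t)))) (at t)"
    by (rule DERIV_chain2[where g = Delta and x = t, OF DERIV_ln_divide[OF Delta_pos]])
  then show ?thesis
    using Delta_pos[of t] by simp
qed

lemma P_deriv: "(P has_real_derivative along WH_P_rate t) (at t)"
proof -
  define n m where "n = N2 t + N3 t" and "m = N2 t - N3 t"
  have N23: "N2 t = (n + m) / 2" "N3 t = (n - m) / 2"
    by (simp_all add: n_def m_def)
  have "n \<noteq> 0"
    using N2_pos[of t] N3_pos[of t] by (simp add: n_def)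
  have "N2 t + N3 t \<noteq> 0"
    using N2_pos[of t] N3_pos[of t] by simp
  from DERIV_divide[OF DERIV_mult[OF DERIV_diff[OF N2_deriv N3_deriv] Sm_deriv]
      DERIV_add[OF N2_deriv N3_deriv] this]
  show ?thesis
    unfolding P_def
    by (rule DERIV_cong)
      (unfold n_def[symmetric] m_def[symmetric] WH_P_rate_def WH_Sm_def WH_q_def,
       use \<open>n \<noteq> 0\<close> in \<open>simp add: N23 field_simps power2_eq_square\<close>)
qed

lemma Delta_le: "Delta t \<le> (N2 t + N3 t) / 6"
proof -
  interpret WH_state "- N1 t" "N2 t + N3 t" "N2 t - N3 t" "Sp t" "Sm t"
    by (rule state)
  have "N2 t * N3 t \<le> (N2 t + N3 t)\<^sup>2 / 4"
    using zero_le_power2[of "N2 t - N3 t"] by (simp add: power2_eq_square algebra_simps)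
  then have "Delta t \<le> - N1 t * ((N2 t + N3 t)\<^sup>2 / 4)"
    unfolding Delta_def using N1_neg[of t] by (simp add: mult.assoc mult_left_mono)
  also have "\<dots> = (- N1 t * (N2 t + N3 t)) * (N2 t + N3 t) / 4"
    by (simp add: power2_eq_square)
  also have "\<dots> \<le> 2/3 * (N2 t + N3 t) / 4"
    using xn_le n_pos by (intro divide_right_mono mult_right_mono) auto
  finally show ?thesis by simp
qed

lemma Sp_minus_P_le: "Sp t - sqrt 3 / 2 * P t \<le> 2"
proof -
  interpret WH_state "- N1 t" "N2 t + N3 t" "N2 t - N3 t" "Sp t" "Sm t"
    by (rule state)
  have "\<bar>P t\<bar> \<le> 1"
    using abs_mr_div_n_le_abs_r abs_r_le_1 by (simp add: P_def)
  moreover have "sqrt 3 \<le> 2"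
    using real_sqrt_le_mono[of 3 4] by simp
  ultimately have "\<bar>sqrt 3 / 2 * P t\<bar> \<le> 1"
    using mult_mono[of "sqrt 3" 2 "\<bar>P t\<bar>" 1] by (simp add: abs_mult)
  then show ?thesis
    using abs_p_le_1 by linarith
qed

definition G :: "real \<Rightarrow> real" where
  "G = (\<lambda>t. Sp t - sqrt 3 / 2 * P t + 3/2 * ln (Delta t))"

lemma G_ge_linear:
  assumes "0 \<le> t"
  shows "G 0 + t / 2 \<le> G t"
proof -
  have G_deriv: "(G has_real_derivative
      along WH_Sp_rate t - sqrt 3 / 2 * along WH_P_rate t + 3/2 * (3 * WH_q (Sp t) (Sm t))) (at t)" for t
    unfolding G_def by (intro DERIV_add DERIV_diff DERIV_cmult Sp_deriv P_deriv ln_Delta_deriv)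
  have G_rate: "1/2 \<le> along WH_Sp_rate t - sqrt 3 / 2 * along WH_P_rate t
      + 3/2 * (3 * WH_q (Sp t) (Sm t))" for t
    using WH_state.G_rate_ge[OF state] by simp
  show ?thesis
    using DERIV_ge_imp_linear_lower_bound[OF G_deriv G_rate assms] by simp
qed

lemma N_sum_unbounded: "filterlim (\<lambda>t. N2 t + N3 t) at_top at_top"
proof -
  have lower: "(4 * G 0 - 2) + 2 * t \<le> N2 t + N3 t" if "0 \<le> t" for t
    using G_ge_linear[OF that] Sp_minus_P_le[of t] Delta_le[of t] ln_le_minus_one[OF Delta_pos[of t]]
    unfolding G_def by force
  have linear: "filterlim (\<lambda>t. (4 * G 0 - 2) + 2 * t) at_top at_top"
    by (intro filterlim_tendsto_add_at_top[OF tendsto_const]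
        filterlim_tendsto_pos_mult_at_top[OF tendsto_const _ filterlim_ident]) simp
  show ?thesis
    by (rule filterlim_at_top_mono[OF linear])
      (unfold eventually_at_top_linorder, use lower in blast)
qed

lemma P_tendsto_0: "(P \<longlongrightarrow> 0) at_top"
proof (rule Lim_null_comparison)
  show "eventually (\<lambda>t. norm (P t) \<le> 1 / (sqrt 3 * (N2 t + N3 t))) at_top"
    using WH_state.abs_mr_div_n_le[OF state] by (simp add: P_def)
  have "filterlim (\<lambda>t. sqrt 3 * (N2 t + N3 t)) at_top at_top"
    by (rule filterlim_tendsto_pos_mult_at_top[OF tendsto_const _ N_sum_unbounded]) simp
  then show "((\<lambda>t. 1 / (sqrt 3 * (N2 t + N3 t))) \<longlongrightarrow> 0) at_top"
    using tendsto_inverse_0_at_top by (simp add: inverse_eq_divide)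
qed

definition Y :: "real \<Rightarrow> real" where
  "Y = (\<lambda>t. ln (Z t) - P t / sqrt 3)"

lemma Y_deriv: "(Y has_real_derivative along WH_lnZ_rate t - along WH_P_rate t / sqrt 3) (at t)"
  unfolding Y_def by (intro DERIV_diff DERIV_cdivide ln_Z_deriv P_deriv)

lemma Y_deriv_ge:
  assumes "1 \<le> N2 t + N3 t"
  shows "3/2 - 3 * Z t - 4 / (N2 t + N3 t) \<le> along WH_lnZ_rate t - along WH_P_rate t / sqrt 3"
  using WH_state.Y_rate_ge[OF state assms] by (simp add: Z_def mult.assoc)

lemma Z_eventually_close_to_half:
  assumes "0 < \<epsilon>" "\<epsilon> < 1/2"
  shows "eventually (\<lambda>t. 1/2 - \<epsilon> \<le> Z t) at_top"
proof -
  define A B where "A = 1/2 - \<epsilon>" and "B = 1/2 - \<epsilon> / 2"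
  have "0 < A" "A < B"
    using assms by (simp_all add: A_def B_def)
  define \<delta> where "\<delta> = (ln B - ln A) / 2"
  have "0 < \<delta>" and ln_A: "ln A = ln B - 2 * \<delta>"
    using \<open>0 < A\<close> \<open>A < B\<close> by (simp_all add: \<delta>_def field_simps)
  have P_lim: "((\<lambda>t. P t / sqrt 3) \<longlongrightarrow> 0) at_top"
    using tendsto_divide[OF P_tendsto_0 tendsto_const, of "sqrt 3"] by simp
  have "eventually (\<lambda>t. - \<delta> < P t / sqrt 3 \<and> P t / sqrt 3 < \<delta>
      \<and> max 1 (8 / \<epsilon>) \<le> N2 t + N3 t) at_top"
    using order_tendstoD[OF P_lim, of "- \<delta>"] order_tendstoD[OF P_lim, of \<delta>] \<open>0 < \<delta>\<close>
      N_sum_unbounded[unfolded filterlim_at_top, rule_format, of "max 1 (8 / \<epsilon>)"]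
    by (intro eventually_conj) auto
  then obtain T where T: "\<And>t. T \<le> t \<Longrightarrow>
      - \<delta> < P t / sqrt 3 \<and> P t / sqrt 3 < \<delta> \<and> max 1 (8 / \<epsilon>) \<le> N2 t + N3 t"
    unfolding eventually_at_top_linorder by blast
  txt \<open>Below the level ln B - \<delta> of Y we have Z < B, hence Y' \<ge> \<epsilon>; the margin \<delta>
    absorbs the correction P / sqrt 3 when passing between Y and ln Z.\<close>
  have "eventually (\<lambda>t. ln B - \<delta> \<le> Y t) at_top"
  proof (rule eventually_ge_threshold[OF Y_deriv _ \<open>0 < \<epsilon>\<close>])
    fix t assume "T \<le> t" "Y t < ln B - \<delta>"
    then have "ln (Z t) < ln B"
      using T[of t] unfolding Y_def by linarith
    then have "Z t < B"
      using Z_pos[of t] \<open>0 < A\<close> \<open>A < B\<close> by simp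
    moreover have "4 / (N2 t + N3 t) \<le> \<epsilon> / 2"
      using T[OF \<open>T \<le> t\<close>] \<open>0 < \<epsilon>\<close> by (simp add: field_simps)
    ultimately show "\<epsilon> \<le> along WH_lnZ_rate t - along WH_P_rate t / sqrt 3"
      using Y_deriv_ge[of t] T[OF \<open>T \<le> t\<close>] by (simp add: B_def)
  qed
  then show ?thesis
  proof (rule eventually_mono[OF eventually_conj[OF _ eventually_ge_at_top[of T]]])
    fix t assume "ln B - \<delta> \<le> Y t \<and> T \<le> t"
    then have "ln A \<le> ln (Z t)"
      using T[of t] ln_A unfolding Y_def by auto
    then show "1/2 - \<epsilon> \<le> Z t"
      using Z_pos[of t] \<open>0 < A\<close> by (simp add: A_def)
  qed
qed

lemma Z_eventually_ge:
  assumes "0 < \<epsilon>"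
  shows "eventually (\<lambda>t. 1/2 - \<epsilon> \<le> Z t) at_top"
proof -
  have "eventually (\<lambda>t. 1/2 - min \<epsilon> (1/4) \<le> Z t) at_top"
    by (rule Z_eventually_close_to_half) (use assms in auto)
  then show ?thesis
    by (rule eventually_mono) (use min.cobounded1[of \<epsilon> "1/4"] in linarith)
qed

end

theorem mainTheorem16:
  fixes N1 N2 N3 Sp Sm :: "real \<Rightarrow> real"
  assumes "WH_solution N1 N2 N3 Sp Sm"
    and "\<forall>t. N1 t < 0" and "\<forall>t. N2 t > 0" and "\<forall>t. N3 t > 0"
  shows "\<forall>\<epsilon>>0. \<exists>T. \<forall>\<tau>\<ge>T. - N1 \<tau> * (N2 \<tau> + N3 \<tau>) \<ge> 1/2 - \<epsilon>"
proof -
  interpret WH_VIII_orbit N1 N2 N3 Sp Sm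
    using assms by unfold_locales auto
  show ?thesis
    using Z_eventually_ge unfolding Z_def eventually_at_top_linorder by blast
qed

end
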